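(* Let $m=2$ and $i\in[n]$. If $g$ is a nonzero element of $\mathrm{LSym}$ and $g/\kappa_i\in\mathbb{C}[\mathbf{a},\mathbf{b}]$, then $g/\kappa_i\in\mathrm{LSym}$.
   Context: Variables $a_1,\dots,a_n,b_1,\dots,b_n$ (subscripts mod $n$), where $a_i=x_1^i$, $b_i=x_2^i$. $\mathrm{LSym}$ is the $\mathbb{C}$-subalgebra of $\mathbb{C}[\mathbf{a},\mathbf{b}]$ generated by $a_j+b_{j-1}$ and $a_jb_j$ for $j\in[n]$. $\kappa_i=\sum_{k=0}^{n-1}b_ib_{i+1}\cdots b_{i+k-1}a_{i+k+1}\cdots a_{i+n-1}$. *)

theory Defs
  imports Complex_Main "HOL-Library.Poly_Mapping"
begin

text \<open>Polynomials in commuting variables indexed by pairs (s, j): the variable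
  x_s^j, where s \<in> {1,2} (m = 2) and j \<in> {0..<n} is the index taken mod n.\<close>

type_synonym var = "nat \<times> nat"
type_synonym cpoly = "(var \<Rightarrow>\<^sub>0 nat) \<Rightarrow>\<^sub>0 complex"

definition PVar :: "var \<Rightarrow> cpoly" where
  "PVar v = Poly_Mapping.single (Poly_Mapping.single v 1) 1"

definition PConst :: "complex \<Rightarrow> cpoly" where
  "PConst c = Poly_Mapping.single 0 c"

definition avar :: "nat \<Rightarrow> int \<Rightarrow> cpoly" where
  "avar n i = PVar (1, nat (i mod int n))"

definition bvar :: "nat \<Rightarrow> int \<Rightarrow> cpoly" where
  "bvar n i = PVar (2, nat (i mod int n))"

definition Cab :: "nat \<Rightarrow> cpoly set" where
  "Cab n = {p. \<forall>m \<in> Poly_Mapping.keys p. Poly_Mapping.keys m \<subseteq> {1,2} \<times> {..<n}}"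

inductive_set LSym :: "nat \<Rightarrow> cpoly set" for n :: nat where
  const: "PConst c \<in> LSym n"
| gen1: "j \<in> {1..n} \<Longrightarrow> avar n (int j) + bvar n (int j - 1) \<in> LSym n"
| gen2: "j \<in> {1..n} \<Longrightarrow> avar n (int j) * bvar n (int j) \<in> LSym n"
| add: "p \<in> LSym n \<Longrightarrow> q \<in> LSym n \<Longrightarrow> p + q \<in> LSym n"
| mult: "p \<in> LSym n \<Longrightarrow> q \<in> LSym n \<Longrightarrow> p * q \<in> LSym n"

definition kappa :: "nat \<Rightarrow> int \<Rightarrow> cpoly" where
  "kappa n i = (\<Sum>k<n. (\<Prod>j<k. bvar n (i + int j)) *
                        (\<Prod>j\<in>{k+1..<n}. avar n (i + int j)))"

end

(* Write U_r = a_(i+r) + b_(i+r-1) and V_r = a_(i+r) b_(i+r). Then LSym is the image of the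
   polynomial ring in the U_r, V_r, and kappa_i is the continuant Q_(n-1) of the recursion
   Q_(m+2) = U_(m+2) Q_(m+1) - V_(m+1) Q_m, so kappa_i lies in LSym.
   After the triangular change of variables theta (a_(i+r) to x_r - y_(r-1), b_(i+r) to y_r) and
   for a suitable lexicographic order, distinct monomials in the U_r, V_r acquire distinct leading
   monomials: they form a SAGBI basis, and the leading monomial of theta g for g in LSym is that of
   a monomial in the generators. The leading monomial of theta kappa_i is that of one specific
   monomial, which divides every monomial whose leading monomial it divides; hence if kappa_i q
   lies in LSym, the leading monomial of theta q is again that of a monomial M in the generators. Subtracting the right multiple of M
   lowers it while keeping kappa_i q in LSym, and the order is well-founded on finitely many
   variables. *)

theory Submission
  imports Defs "HOL-Library.Product_Lexorder"
begin

abbreviation keys :: "('a \<Rightarrow>\<^sub>0 'b::zero) \<Rightarrow> 'a set" where "keys \<equiv> Poly_Mapping.keys"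
abbreviation lookup :: "('a \<Rightarrow>\<^sub>0 'b::zero) \<Rightarrow> 'a \<Rightarrow> 'b" where "lookup \<equiv> Poly_Mapping.lookup"
abbreviation single :: "'a \<Rightarrow> 'b \<Rightarrow> 'a \<Rightarrow>\<^sub>0 'b::zero" where "single \<equiv> Poly_Mapping.single"

lemma keys_add_subset: "keys a \<subseteq> K \<Longrightarrow> keys b \<subseteq> K \<Longrightarrow> keys (a + b) \<subseteq> K"
  using keys_add[of a b] by blast

section \<open>Substitution homomorphisms\<close>

definition subst_monom ::
  "('v \<Rightarrow> ('w \<Rightarrow>\<^sub>0 nat) \<Rightarrow>\<^sub>0 'a::comm_semiring_1) \<Rightarrow> ('v \<Rightarrow>\<^sub>0 nat) \<Rightarrow> ('w \<Rightarrow>\<^sub>0 nat) \<Rightarrow>\<^sub>0 'a" where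
  "subst_monom \<sigma> m = (\<Prod>v\<in>keys m. \<sigma> v ^ lookup m v)"

definition subst ::
  "('v \<Rightarrow> ('w \<Rightarrow>\<^sub>0 nat) \<Rightarrow>\<^sub>0 'a::comm_semiring_1) \<Rightarrow> (('v \<Rightarrow>\<^sub>0 nat) \<Rightarrow>\<^sub>0 'a) \<Rightarrow> ('w \<Rightarrow>\<^sub>0 nat) \<Rightarrow>\<^sub>0 'a" where
  "subst \<sigma> p = (\<Sum>m\<in>keys p. single 0 (lookup p m) * subst_monom \<sigma> m)"

lemma poly_mapping_eq_sum_single: "p = (\<Sum>m\<in>keys p. single m (lookup p m))"
  by (rule poly_mapping_eqI) (simp add: lookup_sum lookup_single when_def in_keys_iff)

lemma mult_eq_sum_single:
  fixes p q :: "('m::comm_monoid_add) \<Rightarrow>\<^sub>0 'a::comm_semiring_0"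
  shows "p * q = (\<Sum>a\<in>keys p. \<Sum>b\<in>keys q. single (a + b) (lookup p a * lookup q b))"
proof -
  have "p * q = (\<Sum>a\<in>keys p. single a (lookup p a)) * (\<Sum>b\<in>keys q. single b (lookup q b))"
    using poly_mapping_eq_sum_single[of p] poly_mapping_eq_sum_single[of q] by simp
  then show ?thesis
    by (simp add: sum_product mult_single)
qed

lemma subst_monom_eq_prod_superset:
  assumes "finite K" "keys m \<subseteq> K"
  shows "subst_monom \<sigma> m = (\<Prod>v\<in>K. \<sigma> v ^ lookup m v)"
  unfolding subst_monom_def
  by (rule prod.mono_neutral_left) (use assms in \<open>auto simp: in_keys_iff\<close>)

lemma subst_monom_add: "subst_monom \<sigma> (m1 + m2) = subst_monom \<sigma> m1 * subst_monom \<sigma> m2"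
proof -
  let ?K = "keys m1 \<union> keys m2"
  have "subst_monom \<sigma> (m1 + m2) = (\<Prod>v\<in>?K. \<sigma> v ^ lookup m1 v * \<sigma> v ^ lookup m2 v)"
    by (simp add: subst_monom_eq_prod_superset[OF _ keys_add] lookup_add power_add)
  also have "\<dots> = subst_monom \<sigma> m1 * subst_monom \<sigma> m2"
    by (simp add: prod.distrib subst_monom_eq_prod_superset[of ?K])
  finally show ?thesis .
qed

lemma subst_eq_sum_superset:
  assumes "finite M" "keys p \<subseteq> M"
  shows "subst \<sigma> p = (\<Sum>m\<in>M. single 0 (lookup p m) * subst_monom \<sigma> m)"
  unfolding subst_def
  by (rule sum.mono_neutral_left) (use assms in \<open>auto simp: in_keys_iff\<close>)

lemma subst_add: "subst \<sigma> (p + q) = subst \<sigma> p + subst \<sigma> q"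
proof -
  let ?M = "keys p \<union> keys q"
  have "subst \<sigma> (p + q) = (\<Sum>m\<in>?M. single 0 (lookup p m) * subst_monom \<sigma> m
                                + single 0 (lookup q m) * subst_monom \<sigma> m)"
    by (simp add: subst_eq_sum_superset[OF _ keys_add] lookup_add single_add distrib_right)
  also have "\<dots> = subst \<sigma> p + subst \<sigma> q"
    by (simp add: sum.distrib subst_eq_sum_superset[of ?M])
  finally show ?thesis .
qed

lemma subst_zero [simp]: "subst \<sigma> 0 = 0"
  by (simp add: subst_def)

lemma subst_single: "subst \<sigma> (single m c) = single 0 c * subst_monom \<sigma> m"
  by (simp add: subst_def)

lemma subst_sum: "subst \<sigma> (sum f A) = (\<Sum>a\<in>A. subst \<sigma> (f a))"
  by (induction A rule: infinite_finite_induct) (auto simp: subst_add)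

lemma subst_mult: "subst \<sigma> (p * q) = subst \<sigma> p * subst \<sigma> q"
proof -
  have "subst \<sigma> (p * q) = (\<Sum>a\<in>keys p. \<Sum>b\<in>keys q.
      single 0 (lookup p a) * subst_monom \<sigma> a * (single 0 (lookup q b) * subst_monom \<sigma> b))"
    by (subst mult_eq_sum_single) (simp add: subst_sum subst_single subst_monom_add mult_single ac_simps)
  also have "\<dots> = subst \<sigma> p * subst \<sigma> q"
    by (simp add: subst_def sum_product)
  finally show ?thesis .
qed

lemma subst_const [simp]: "subst \<sigma> (single 0 c) = single 0 c"
  by (simp add: subst_single subst_monom_def)

lemma subst_one [simp]: "subst \<sigma> 1 = 1"
  using subst_const[of \<sigma> 1] by simp

lemma subst_var [simp]: "subst \<sigma> (single (single v 1) 1) = \<sigma> v"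
  by (simp add: subst_single subst_monom_def)

lemma subst_diff:
  fixes \<sigma> :: "'v \<Rightarrow> ('w \<Rightarrow>\<^sub>0 nat) \<Rightarrow>\<^sub>0 'a::comm_ring_1"
  shows "subst \<sigma> (p - q) = subst \<sigma> p - subst \<sigma> q"
  by (metis add_diff_cancel_right' diff_add_cancel subst_add)

lemma subst_prod: "subst \<sigma> (prod f A) = (\<Prod>a\<in>A. subst \<sigma> (f a))"
  by (induction A rule: infinite_finite_induct) (auto simp: subst_mult)

lemma subst_power: "subst \<sigma> (p ^ k) = subst \<sigma> p ^ k"
  by (induction k) (auto simp: subst_mult)

lemma subst_subst_monom: "subst \<tau> (subst_monom \<sigma> m) = subst_monom (\<lambda>v. subst \<tau> (\<sigma> v)) m"
  by (simp add: subst_monom_def subst_prod subst_power)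

lemma subst_subst: "subst \<tau> (subst \<sigma> p) = subst (\<lambda>v. subst \<tau> (\<sigma> v)) p"
  by (simp add: subst_def[of \<sigma> p] subst_sum subst_mult subst_subst_monom subst_def[of _ p])

lemma subst_vars_id:
  fixes p :: "('v \<Rightarrow>\<^sub>0 nat) \<Rightarrow>\<^sub>0 'a::comm_semiring_1"
  shows "subst (\<lambda>v. single (single v 1) 1) p = p"
proof -
  have single_power: "single (single v 1) (1::'a) ^ k
      = single (single v k) 1" for v k
    by (induction k) (auto simp: mult_single single_add[symmetric] add.commute)
  have prod_single: "(\<Prod>v\<in>K. single (f v) (1::'a)) = single (\<Sum>v\<in>K. f v) 1"
    for K and f :: "'v \<Rightarrow> 'v \<Rightarrow>\<^sub>0 nat"
    by (induction K rule: infinite_finite_induct) (auto simp: mult_single)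
  have "subst_monom (\<lambda>v. single (single v 1) (1::'a)) m = single m 1"
    for m :: "'v \<Rightarrow>\<^sub>0 nat"
  proof -
    have "subst_monom (\<lambda>v. single (single v 1) (1::'a)) m = single (\<Sum>v\<in>keys m. single v (lookup m v)) 1"
      by (simp only: subst_monom_def single_power prod_single)
    then show ?thesis
      by (simp flip: poly_mapping_eq_sum_single)
  qed
  then show ?thesis
    by (simp add: subst_def mult_single flip: poly_mapping_eq_sum_single)
qed

definition polys_in :: "'v set \<Rightarrow> (('v \<Rightarrow>\<^sub>0 nat) \<Rightarrow>\<^sub>0 'a::zero) set" where
  "polys_in K = {p. \<forall>m\<in>keys p. keys m \<subseteq> K}"

lemma polys_in_zero [simp]: "0 \<in> polys_in K"
  by (simp add: polys_in_def)

lemma polys_in_const [simp]: "single 0 c \<in> polys_in K"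
  by (simp add: polys_in_def)

lemma polys_in_one [simp]: "1 \<in> polys_in K"
  by (simp add: polys_in_def)

lemma polys_in_var: "v \<in> K \<Longrightarrow> single (single v 1) c \<in> polys_in K"
  by (simp add: polys_in_def)

lemma polys_in_add: "p \<in> polys_in K \<Longrightarrow> q \<in> polys_in K \<Longrightarrow> p + q \<in> polys_in K"
  unfolding polys_in_def using keys_add[of p q] by blast

lemma polys_in_diff:
  fixes p q :: "('v \<Rightarrow>\<^sub>0 nat) \<Rightarrow>\<^sub>0 'a::ab_group_add"
  shows "p \<in> polys_in K \<Longrightarrow> q \<in> polys_in K \<Longrightarrow> p - q \<in> polys_in K"
  unfolding polys_in_def using keys_diff[of p q] by blast

lemma polys_in_mult:
  fixes p q :: "('v \<Rightarrow>\<^sub>0 nat) \<Rightarrow>\<^sub>0 'a::semiring_0"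
  assumes "p \<in> polys_in K" "q \<in> polys_in K"
  shows "p * q \<in> polys_in K"
  unfolding polys_in_def mem_Collect_eq
proof (intro ballI subsetI)
  fix m x assume "m \<in> keys (p * q)" "x \<in> keys m"
  then obtain a b where "m = a + b" "a \<in> keys p" "b \<in> keys q"
    using keys_mult[of p q] by blast
  moreover have "x \<in> keys a \<union> keys b"
    using \<open>x \<in> keys m\<close> keys_add[of a b] \<open>m = a + b\<close> by blast
  ultimately show "x \<in> K"
    using assms unfolding polys_in_def by blast
qed

lemma polys_in_sum: "(\<And>a. a \<in> A \<Longrightarrow> f a \<in> polys_in K) \<Longrightarrow> sum f A \<in> polys_in K"
  by (induction A rule: infinite_finite_induct) (simp_all add: polys_in_add)

lemma polys_in_prod:
  fixes f :: "'b \<Rightarrow> ('v \<Rightarrow>\<^sub>0 nat) \<Rightarrow>\<^sub>0 'a::comm_semiring_1"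
  shows "(\<And>a. a \<in> A \<Longrightarrow> f a \<in> polys_in K) \<Longrightarrow> prod f A \<in> polys_in K"
  by (induction A rule: infinite_finite_induct)
    (simp_all add: polys_in_mult)

lemma polys_in_subst:
  assumes "p \<in> polys_in K" "\<And>v. v \<in> K \<Longrightarrow> \<sigma> v \<in> polys_in K'"
  shows "subst \<sigma> p \<in> polys_in K'"
  unfolding subst_def subst_monom_def
proof (intro polys_in_sum polys_in_mult polys_in_const polys_in_prod)
  fix m v k assume "m \<in> keys p" "v \<in> keys m"
  then have "\<sigma> v \<in> polys_in K'"
    using assms unfolding polys_in_def by blast
  then show "\<sigma> v ^ k \<in> polys_in K'"
    by (induction k) (simp_all add: polys_in_mult)
qed

section \<open>Leading monomials\<close>

definition lead_monom :: "('m::linorder \<Rightarrow>\<^sub>0 'a::zero) \<Rightarrow> 'm" where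
  "lead_monom p = Max (keys p)"

definition lead_coef :: "('m::linorder \<Rightarrow>\<^sub>0 'a::zero) \<Rightarrow> 'a" where
  "lead_coef p = lookup p (lead_monom p)"

lemma lead_monom_in_keys: "p \<noteq> 0 \<Longrightarrow> lead_monom p \<in> keys p"
  unfolding lead_monom_def by (rule Max_in) auto

lemma le_lead_monom: "m \<in> keys p \<Longrightarrow> m \<le> lead_monom p"
  unfolding lead_monom_def by (rule Max_ge) auto

lemma lead_coef_nonzero: "p \<noteq> 0 \<Longrightarrow> lead_coef p \<noteq> 0"
  unfolding lead_coef_def using lead_monom_in_keys in_keys_iff by blast

lemma lead_monom_eqI: "m \<in> keys p \<Longrightarrow> (\<And>m'. m' \<in> keys p \<Longrightarrow> m' \<le> m) \<Longrightarrow> lead_monom p = m"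
  unfolding lead_monom_def by (rule Max_eqI) auto

lemma lead_monom_uminus [simp]: "lead_monom (- p) = lead_monom p"
  by (simp add: lead_monom_def)

lemma lookup_mult_lead_monoms:
  fixes p q :: "('m::{linorder, ordered_cancel_comm_monoid_add}) \<Rightarrow>\<^sub>0 'a::comm_semiring_0"
  assumes "p \<noteq> 0" "q \<noteq> 0"
  shows "lookup (p * q) (lead_monom p + lead_monom q) = lead_coef p * lead_coef q"
proof -
  let ?A = "lead_monom p" and ?B = "lead_monom q"
  have only_top: "(\<Sum>b\<in>keys q. lookup p a * lookup q b when a + b = ?A + ?B)
      = (lookup p ?A * lookup q ?B when a = ?A)" if "a \<in> keys p" for a
  proof (cases "a = ?A")
    case True
    then show ?thesis
      using lead_monom_in_keys[OF assms(2)] by (simp add: when_def)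
  next
    case False
    then have "a < ?A" using le_lead_monom[OF that] by simp
    then have less: "a + b < ?A + ?B" if "b \<in> keys q" for b
      using le_lead_monom[OF that] by (rule add_less_le_mono)
    have "(\<Sum>b\<in>keys q. lookup p a * lookup q b when a + b = ?A + ?B) = 0"
      by (rule sum.neutral) (simp add: when_def less less_imp_neq)
    then show ?thesis
      using False by simp
  qed
  have "lookup (p * q) (?A + ?B)
      = (\<Sum>a\<in>keys p. \<Sum>b\<in>keys q. lookup p a * lookup q b when a + b = ?A + ?B)"
    by (subst mult_eq_sum_single) (simp add: lookup_sum lookup_single)
  also have "\<dots> = (\<Sum>a\<in>keys p. lookup p ?A * lookup q ?B when a = ?A)"
    by (rule sum.cong) (simp_all add: only_top)
  also have "\<dots> = lead_coef p * lead_coef q"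
    using lead_monom_in_keys[OF assms(1)] by (simp add: when_def lead_coef_def)
  finally show ?thesis .
qed

lemma lead_monom_mult:
  fixes p q :: "('m::{linorder, ordered_cancel_comm_monoid_add}) \<Rightarrow>\<^sub>0 'a::{comm_semiring_0, semiring_no_zero_divisors}"
  assumes "p \<noteq> 0" "q \<noteq> 0"
  shows "lead_monom (p * q) = lead_monom p + lead_monom q"
    and "lead_coef (p * q) = lead_coef p * lead_coef q"
proof -
  note top = lookup_mult_lead_monoms[OF assms]
  show "lead_monom (p * q) = lead_monom p + lead_monom q"
  proof (rule lead_monom_eqI)
    show "lead_monom p + lead_monom q \<in> keys (p * q)"
      using top lead_coef_nonzero[OF assms(1)] lead_coef_nonzero[OF assms(2)] by (simp add: in_keys_iff)
    fix m assume "m \<in> keys (p * q)"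
    then obtain a b where "m = a + b" "a \<in> keys p" "b \<in> keys q"
      using keys_mult by blast
    then show "m \<le> lead_monom p + lead_monom q" by (simp add: add_mono le_lead_monom)
  qed
  then show "lead_coef (p * q) = lead_coef p * lead_coef q"
    using top by (simp add: lead_coef_def)
qed

lemma lead_monom_add_smaller:
  assumes "p \<noteq> 0" "\<And>m. m \<in> keys q \<Longrightarrow> m < lead_monom p"
  shows "p + q \<noteq> 0" "lead_monom (p + q) = lead_monom p"
proof -
  have "lead_monom p \<notin> keys q" using assms(2) by blast
  then have top: "lookup (p + q) (lead_monom p) = lead_coef p"
    by (simp add: lookup_add lead_coef_def in_keys_iff)
  then have in_keys: "lead_monom p \<in> keys (p + q)"
    using lead_coef_nonzero[OF assms(1)] by (simp add: in_keys_iff)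
  then show "p + q \<noteq> 0" by auto
  show "lead_monom (p + q) = lead_monom p"
  proof (rule lead_monom_eqI[OF in_keys])
    fix m assume "m \<in> keys (p + q)"
    then have "m \<in> keys p \<or> m \<in> keys q"
      using keys_add[of p q] by blast
    then show "m \<le> lead_monom p"
      using assms(2)[of m] le_lead_monom[of m p] by auto
  qed
qed

lemma lead_monom_diff:
  fixes p q :: "'m::linorder \<Rightarrow>\<^sub>0 'a::ab_group_add"
  assumes "p \<noteq> 0" "q = 0 \<or> lead_monom q < lead_monom p"
  shows "p - q \<noteq> 0" "lead_monom (p - q) = lead_monom p"
proof -
  have "m < lead_monom p" if "m \<in> keys (- q)" for m
    using that assms(2) le_lead_monom[of m q] by auto
  then have "p + - q \<noteq> 0 \<and> lead_monom (p + - q) = lead_monom p"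
    using lead_monom_add_smaller[OF assms(1), of "- q"] by blast
  then show "p - q \<noteq> 0" "lead_monom (p - q) = lead_monom p"
    by simp_all
qed

lemma lead_monom_diff':
  fixes p q :: "'m::linorder \<Rightarrow>\<^sub>0 'a::ab_group_add"
  assumes "q \<noteq> 0" "p = 0 \<or> lead_monom p < lead_monom q"
  shows "p - q \<noteq> 0" "lead_monom (p - q) = lead_monom q"
  using lead_monom_diff[OF assms] lead_monom_uminus[of "q - p"] by (simp_all add: right_minus_eq)

lemma lead_monom_diff_less:
  fixes p r :: "'m::linorder \<Rightarrow>\<^sub>0 'a::ab_group_add"
  assumes "lead_monom p = lead_monom r" "lead_coef p = lead_coef r" "p - r \<noteq> 0"
  shows "lead_monom (p - r) < lead_monom p"
proof -
  have "lead_monom (p - r) \<in> keys p \<union> keys r"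
    using lead_monom_in_keys[OF assms(3)] keys_diff[of p r] by (rule subsetD[rotated])
  then have "lead_monom (p - r) \<le> lead_monom p"
    using le_lead_monom[of "lead_monom (p - r)" p] le_lead_monom[of "lead_monom (p - r)" r] assms(1)
    by auto
  moreover have "lookup (p - r) (lead_monom p) = 0"
    using assms(1,2) by (simp add: lookup_minus lead_coef_def)
  then have "lead_monom (p - r) \<noteq> lead_monom p"
    using lead_monom_in_keys[OF assms(3)] by (auto simp: in_keys_iff)
  ultimately show ?thesis by simp
qed

lemma lead_monom_const_mult:
  fixes p :: "('m::{linorder, ordered_cancel_comm_monoid_add}) \<Rightarrow>\<^sub>0 'a::{comm_semiring_0, semiring_no_zero_divisors}"
  assumes "c \<noteq> 0" "p \<noteq> 0"
  shows "single 0 c * p \<noteq> 0" "lead_monom (single 0 c * p) = lead_monom p"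
    and "lead_coef (single 0 c * p) = c * lead_coef p"
proof -
  have const: "single 0 c \<noteq> 0" "lead_monom (single 0 c :: 'm \<Rightarrow>\<^sub>0 'a) = 0" "lead_coef (single 0 c :: 'm \<Rightarrow>\<^sub>0 'a) = c"
    using assms(1) by (auto simp: lead_monom_def lead_coef_def dest: arg_cong[of _ _ "\<lambda>p. lookup p 0"])
  show "single 0 c * p \<noteq> 0"
    using const(1) assms(2) by simp
  show "lead_monom (single 0 c * p) = lead_monom p" "lead_coef (single 0 c * p) = c * lead_coef p"
    using lead_monom_mult[OF const(1) assms(2)] const by simp_all
qed

lemma lead_monom_one [simp]:
  "lead_monom (1 :: ('m::{linorder, comm_monoid_add}) \<Rightarrow>\<^sub>0 'a::comm_semiring_1) = 0"
  by (simp add: lead_monom_def flip: single_one)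

lemma lead_monom_var [simp]: "lead_monom (single (single x 1) (1::'a::zero_neq_one)) = single x 1"
  by (simp add: lead_monom_def)

lemma lead_monom_prod_power:
  fixes p :: "'b \<Rightarrow> ('v::linorder \<Rightarrow>\<^sub>0 nat) \<Rightarrow>\<^sub>0 'a::{comm_semiring_1, semiring_no_zero_divisors}"
  assumes "finite F" "\<And>v. v \<in> F \<Longrightarrow> p v \<noteq> 0"
  shows "(\<Prod>v\<in>F. p v ^ e v) \<noteq> 0"
    and "lookup (lead_monom (\<Prod>v\<in>F. p v ^ e v)) x = (\<Sum>v\<in>F. e v * lookup (lead_monom (p v)) x)"
proof -
  have power: "p v ^ k \<noteq> 0 \<and> lookup (lead_monom (p v ^ k)) x = k * lookup (lead_monom (p v)) x"
    if "v \<in> F" for v k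
  proof (induction k)
    case (Suc k)
    then show ?case
      using lead_monom_mult(1)[of "p v" "p v ^ k"] assms(2)[OF that] by (simp add: lookup_add)
  qed (simp add: lead_monom_def)
  have "(\<Prod>v\<in>F. p v ^ e v) \<noteq> 0 \<and>
      lookup (lead_monom (\<Prod>v\<in>F. p v ^ e v)) x = (\<Sum>v\<in>F. e v * lookup (lead_monom (p v)) x)"
    using assms(1) power
  proof (induction F rule: finite_induct)
    case (insert a F)
    then show ?case
      using lead_monom_mult(1)[of "p a ^ e a" "\<Prod>v\<in>F. p v ^ e v"] by (simp add: lookup_add)
  qed (simp add: lead_monom_def)
  then show "(\<Prod>v\<in>F. p v ^ e v) \<noteq> 0"
    and "lookup (lead_monom (\<Prod>v\<in>F. p v ^ e v)) x = (\<Sum>v\<in>F. e v * lookup (lead_monom (p v)) x)"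
    by simp_all
qed

lemma lead_monom_sum_distinct:
  fixes X :: "'b \<Rightarrow> ('m::{linorder, ordered_cancel_comm_monoid_add}) \<Rightarrow>\<^sub>0 'a::{comm_semiring_0, semiring_no_zero_divisors}"
  assumes "finite F" "F \<noteq> {}" "\<And>m. m \<in> F \<Longrightarrow> c m \<noteq> 0" "\<And>m. m \<in> F \<Longrightarrow> X m \<noteq> 0"
    and "inj_on (\<lambda>m. lead_monom (X m)) F"
  shows "\<exists>m\<in>F. lead_monom (\<Sum>m\<in>F. single 0 (c m) * X m) = lead_monom (X m)"
proof -
  let ?L = "\<lambda>m. lead_monom (X m)"
  have "Max (?L ` F) \<in> ?L ` F"
    using assms(1,2) by (intro Max_in) auto
  then obtain ms where ms: "ms \<in> F" "?L ms = Max (?L ` F)"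
    by auto
  have less: "?L m < ?L ms" if "m \<in> F" "m \<noteq> ms" for m
  proof -
    have "?L m \<le> ?L ms"
      using ms(2) assms(1) that(1) by simp
    moreover have "?L m \<noteq> ?L ms"
      using inj_onD[OF assms(5)] that ms(1) by blast
    ultimately show ?thesis by simp
  qed
  have split: "(\<Sum>m\<in>F. single 0 (c m) * X m)
      = single 0 (c ms) * X ms + (\<Sum>m\<in>F - {ms}. single 0 (c m) * X m)"
    using assms(1) ms(1) by (simp add: sum.remove)
  note top = lead_monom_const_mult[OF assms(3,4)[OF ms(1)]]
  have "k < lead_monom (single 0 (c ms) * X ms)"
    if k: "k \<in> keys (\<Sum>m\<in>F - {ms}. single 0 (c m) * X m)" for k
  proof -
    obtain m where m: "m \<in> F" "m \<noteq> ms" "k \<in> keys (single 0 (c m) * X m)"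
      using subsetD[OF keys_sum k] by auto
    have "k \<le> ?L m"
      using le_lead_monom[OF m(3)] lead_monom_const_mult(2)[OF assms(3,4)[OF m(1)]] by simp
    then show ?thesis
      using less[OF m(1,2)] top(2) by simp
  qed
  then have "lead_monom (\<Sum>m\<in>F. single 0 (c m) * X m) = ?L ms"
    using lead_monom_add_smaller(2)[OF top(1)] top(2) split by simp
  then show ?thesis
    using ms(1) by blast
qed

lemma less_poly_mapping_iff:
  "(a::'v::linorder \<Rightarrow>\<^sub>0 'b::{zero, linorder}) < b \<longleftrightarrow>
     (\<exists>k. lookup a k < lookup b k \<and> (\<forall>k'<k. lookup a k' = lookup b k'))"
  by (simp add: less_poly_mapping.rep_eq less_fun_def)

lemma less_poly_mappingI:
  fixes a b :: "'v::linorder \<Rightarrow>\<^sub>0 'b::{zero, linorder}"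
  assumes "lookup a w < lookup b w" "\<And>k. k < w \<Longrightarrow> lookup a k = 0 \<and> lookup b k = 0"
  shows "a < b"
  unfolding less_poly_mapping_iff using assms by (intro exI[of _ w]) auto

lemma single_less_single: "(x::'v::linorder) < y \<Longrightarrow> single y (1::nat) < single x 1"
  by (rule less_poly_mappingI[of _ x]) (auto simp: lookup_single)

text \<open>Induction on \<open>K\<close> from its least element, whose exponent dominates the lexicographic
  comparison.\<close>

lemma wf_less_monom_within:
  assumes "finite K"
  shows "wf {(\<mu>::'v::linorder \<Rightarrow>\<^sub>0 nat, \<nu>). keys \<mu> \<subseteq> K \<and> keys \<nu> \<subseteq> K \<and> \<mu> < \<nu>}"
  using assms
proof (induction K rule: finite_linorder_min_induct)
  case empty
  show ?case by (rule wfI_pf) auto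
next
  case (insert b K)
  let ?R = "{(\<mu>::'v \<Rightarrow>\<^sub>0 nat, \<nu>). keys \<mu> \<subseteq> K \<and> keys \<nu> \<subseteq> K \<and> \<mu> < \<nu>}"
  let ?f = "\<lambda>\<mu>::'v \<Rightarrow>\<^sub>0 nat. (lookup \<mu> b, Poly_Mapping.update b 0 \<mu>)"
  show ?case
  proof (rule wf_subset[OF wf_inv_image[OF wf_lex_prod[OF wf_less_than insert.IH], of ?f]], safe)
    fix \<mu> \<nu> :: "'v \<Rightarrow>\<^sub>0 nat"
    assume k\<mu>: "keys \<mu> \<subseteq> insert b K" and k\<nu>: "keys \<nu> \<subseteq> insert b K" and "\<mu> < \<nu>"
    have keys_update_subset: "keys (Poly_Mapping.update b 0 \<xi>) \<subseteq> K" if "keys \<xi> \<subseteq> insert b K" for \<xi>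
      using that by (auto simp: keys_update)
    from \<open>\<mu> < \<nu>\<close> obtain k where k: "lookup \<mu> k < lookup \<nu> k" "\<forall>k'<k. lookup \<mu> k' = lookup \<nu> k'"
      unfolding less_poly_mapping_iff by blast
    have "k \<in> keys \<nu>"
      using k(1) by (auto simp: in_keys_iff)
    with k\<nu> have "k \<in> insert b K" ..
    show "(\<mu>, \<nu>) \<in> inv_image (less_than <*lex*> ?R) ?f"
    proof (cases "k = b")
      case True
      then show ?thesis using k by simp
    next
      case False
      then have "b < k" using \<open>k \<in> insert b K\<close> insert.hyps(2) by auto
      then have "lookup \<mu> b = lookup \<nu> b" using k(2) by simp
      moreover have "Poly_Mapping.update b 0 \<mu> < Poly_Mapping.update b 0 \<nu>"
        unfolding less_poly_mapping_iff
      proof (intro exI[of _ k] conjI allI impI)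
        show "lookup (Poly_Mapping.update b 0 \<mu>) k < lookup (Poly_Mapping.update b 0 \<nu>) k"
          using k(1) False by (simp add: lookup_update)
        show "lookup (Poly_Mapping.update b 0 \<mu>) k' = lookup (Poly_Mapping.update b 0 \<nu>) k'"
          if "k' < k" for k'
          using k(2) that by (simp add: lookup_update)
      qed
      ultimately show ?thesis
        using keys_update_subset[OF k\<mu>] keys_update_subset[OF k\<nu>] by simp
    qed
  qed
qed

section \<open>The subalgebra \<open>LSym\<close>\<close>

lemma subst_PVar [simp]: "subst \<sigma> (PVar v) = \<sigma> v"
  unfolding PVar_def by (rule subst_var)

lemma subst_PVar_id: "subst PVar p = p"
  using subst_vars_id[of p] by (simp add: PVar_def[abs_def])

lemma PVar_nonzero [simp]: "PVar v \<noteq> 0"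
  by (metis PVar_def lookup_single_eq lookup_zero one_neq_zero)

lemma lead_monom_PVar [simp]: "lead_monom (PVar v) = single v 1"
  unfolding PVar_def by (rule lead_monom_var)

lemma polys_in_PVar: "v \<in> K \<Longrightarrow> PVar v \<in> polys_in K"
  unfolding PVar_def by (rule polys_in_var)

lemma Cab_eq_polys_in: "Cab n = polys_in ({1,2} \<times> {..<n})"
  by (simp add: Cab_def polys_in_def)

lemma cyclic_representative: "0 < n \<Longrightarrow> \<exists>j\<in>{1..n}. int j mod int n = x mod int n"
proof
  assume "0 < n"
  let ?j = "nat ((x - 1) mod int n) + 1"
  have "int ?j = (x - 1) mod int n + 1"
    using \<open>0 < n\<close> by simp
  then have "int ?j mod int n = (x - 1 + 1) mod int n"
    by (simp only: mod_add_left_eq)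
  then show "int ?j mod int n = x mod int n"
    by simp
  have "(x - 1) mod int n < int n"
    using \<open>0 < n\<close> by simp
  then have "nat ((x - 1) mod int n) < n"
    using \<open>0 < n\<close> by (simp add: nat_less_iff)
  then show "?j \<in> {1..n}"
    by simp
qed

lemma LSym_one: "1 \<in> LSym n"
  using LSym.const[of 1 n] by (simp add: PConst_def)

lemma LSym_smult: "p \<in> LSym n \<Longrightarrow> PConst c * p \<in> LSym n"
  by (intro LSym.mult LSym.const)

lemma LSym_diff: "p \<in> LSym n \<Longrightarrow> q \<in> LSym n \<Longrightarrow> p - q \<in> LSym n"
  using LSym.add[OF _ LSym_smult[of q n "- 1"], of p] by (simp add: PConst_def single_uminus)

lemma LSym_zero: "0 \<in> LSym n"
  using LSym.const[of 0 n] by (simp add: PConst_def)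

lemma LSym_power: "p \<in> LSym n \<Longrightarrow> p ^ k \<in> LSym n"
  by (induction k) (auto intro: LSym_one LSym.mult)

lemma LSym_prod: "(\<And>a. a \<in> A \<Longrightarrow> f a \<in> LSym n) \<Longrightarrow> prod f A \<in> LSym n"
  by (induction A rule: infinite_finite_induct) (auto intro: LSym_one LSym.mult)

lemma avar_add_bvar_pred_LSym: "0 < n \<Longrightarrow> avar n x + bvar n (x - 1) \<in> LSym n"
  using cyclic_representative[of n x] LSym.gen1[of _ n]
  by (metis avar_def bvar_def mod_diff_left_eq)

lemma avar_mult_bvar_LSym: "0 < n \<Longrightarrow> avar n x * bvar n x \<in> LSym n"
  using cyclic_representative[of n x] LSym.gen2[of _ n]
  by (metis avar_def bvar_def)

lemma LSym_subset_Cab: "0 < n \<Longrightarrow> LSym n \<subseteq> Cab n"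
proof
  fix g assume "0 < n" "g \<in> LSym n"
  then have vars: "avar n x \<in> Cab n" "bvar n x \<in> Cab n" for x
    by (simp_all add: avar_def bvar_def Cab_eq_polys_in polys_in_PVar nat_less_iff)
  from \<open>g \<in> LSym n\<close> show "g \<in> Cab n"
    using vars unfolding Cab_eq_polys_in
    by induction (simp_all add: polys_in_add polys_in_mult PConst_def)
qed

locale cyclic_indices =
  fixes n i :: nat
  assumes n_pos: "0 < n"
begin

definition offset :: "int \<Rightarrow> nat" where
  "offset x = nat ((x - int i) mod int n)"

abbreviation a_at :: "nat \<Rightarrow> cpoly" where
  "a_at r \<equiv> avar n (int i + int r)"

abbreviation b_at :: "nat \<Rightarrow> cpoly" where
  "b_at r \<equiv> bvar n (int i + int r)"

lemma offset_less: "offset x < n"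
  unfolding offset_def using n_pos by (simp add: nat_less_iff)

lemma int_offset: "int (offset x) = (x - int i) mod int n"
  unfolding offset_def using n_pos by simp

lemma offset_at: "r < n \<Longrightarrow> offset (int i + int r) = r"
  by (simp add: offset_def)

lemma offset_at_pred: "offset (int i + int r - 1) = nat ((int r - 1) mod int n)"
  by (simp add: offset_def algebra_simps)

lemma avar_at_offset: "a_at (offset x) = avar n x"
  by (simp add: avar_def int_offset mod_add_right_eq)

lemma bvar_at_offset: "b_at (offset x) = bvar n x"
  by (simp add: bvar_def int_offset mod_add_right_eq)

lemma bvar_at_offset_pred: "bvar n (int i + int (offset x) - 1) = bvar n (x - 1)"
proof -
  have "(int i + (x - int i) mod int n - 1) mod int n = ((x - int i) mod int n + (int i - 1)) mod int n"
    by (simp add: algebra_simps)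
  also have "\<dots> = (x - 1) mod int n"
    by (simp add: mod_add_left_eq)
  finally show ?thesis
    by (simp add: bvar_def int_offset)
qed

text \<open>\<open>gen_sum r\<close> and \<open>gen_prod r\<close> are the generators \<open>U\<^sub>r = a\<^sub>j + b\<^sub>j\<^sub>-\<^sub>1\<close> and \<open>V\<^sub>r = a\<^sub>j b\<^sub>j\<close>
  for \<open>j = i + r\<close>; \<open>gen\<close> attaches them to the variables \<open>(1, r)\<close> and \<open>(2, r)\<close>, so that \<open>LSym\<close>
  is the image of \<open>subst gen\<close>.\<close>

definition gen_sum :: "nat \<Rightarrow> cpoly" where
  "gen_sum r = a_at r + bvar n (int i + int r - 1)"

definition gen_prod :: "nat \<Rightarrow> cpoly" where
  "gen_prod r = a_at r * b_at r"

definition gen :: "var \<Rightarrow> cpoly" where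
  "gen v = (if fst v = 1 then gen_sum (snd v) else if fst v = 2 then gen_prod (snd v) else 0)"

abbreviation gen_vars :: "var set" where
  "gen_vars \<equiv> {1,2} \<times> {..<n}"

lemma gen_LSym: "gen v \<in> LSym n"
  using avar_add_bvar_pred_LSym[OF n_pos] avar_mult_bvar_LSym[OF n_pos] LSym_zero
  by (auto simp: gen_def gen_sum_def gen_prod_def)

lemma subst_monom_gen_LSym: "subst_monom gen m \<in> LSym n"
  unfolding subst_monom_def by (intro LSym_prod LSym_power gen_LSym)

lemma LSym_eq_subst_gen:
  assumes "g \<in> LSym n"
  obtains P where "P \<in> polys_in gen_vars" "g = subst gen P"
proof -
  have "\<exists>P \<in> polys_in gen_vars. g = subst gen P"
    using assms
  proof induction
    case (const c)
    show ?case
      by (rule bexI[of _ "PConst c"]) (simp_all add: PConst_def)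
  next
    case (gen1 j)
    have "gen (1, offset (int j)) = avar n (int j) + bvar n (int j - 1)"
      by (simp add: gen_def gen_sum_def avar_at_offset bvar_at_offset_pred)
    then show ?case
      using offset_less by (intro bexI[of _ "PVar (1, offset (int j))"] polys_in_PVar) auto
  next
    case (gen2 j)
    have "gen (2, offset (int j)) = avar n (int j) * bvar n (int j)"
      by (simp add: gen_def gen_prod_def avar_at_offset bvar_at_offset)
    then show ?case
      using offset_less by (intro bexI[of _ "PVar (2, offset (int j))"] polys_in_PVar) auto
  next
    case (add p q)
    then show ?case
      by (metis polys_in_add subst_add)
  next
    case (mult p q)
    then show ?case
      by (metis polys_in_mult subst_mult)
  qed
  then show ?thesis
    using that by blast
qed

text \<open>The partial sums \<open>kappa_upto m\<close> of \<open>\<kappa>\<^sub>i\<close> satisfy the continuant recursion, which writes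
  \<open>\<kappa>\<^sub>i\<close> as a polynomial in the generators.\<close>

definition kappa_upto :: "nat \<Rightarrow> cpoly" where
  "kappa_upto m = (\<Sum>k<Suc m. (\<Prod>j<k. b_at j) * (\<Prod>j\<in>{k+1..<Suc m}. a_at j))"

fun continuant :: "nat \<Rightarrow> cpoly" where
  "continuant 0 = 1"
| "continuant (Suc 0) = gen_sum 1"
| "continuant (Suc (Suc m)) = gen_sum (Suc (Suc m)) * continuant (Suc m) - gen_prod (Suc m) * continuant m"

lemma kappa_upto_Suc: "kappa_upto (Suc m) = a_at (Suc m) * kappa_upto m + (\<Prod>j<Suc m. b_at j)"
proof -
  have "kappa_upto (Suc m) = (\<Sum>k<Suc m. (\<Prod>j<k. b_at j) * (\<Prod>j\<in>{k+1..<Suc (Suc m)}. a_at j))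
      + (\<Prod>j<Suc m. b_at j)"
    by (simp add: kappa_upto_def)
  also have "(\<Sum>k<Suc m. (\<Prod>j<k. b_at j) * (\<Prod>j\<in>{k+1..<Suc (Suc m)}. a_at j))
      = (\<Sum>k<Suc m. a_at (Suc m) * ((\<Prod>j<k. b_at j) * (\<Prod>j\<in>{k+1..<Suc m}. a_at j)))"
  proof (rule sum.cong[OF refl])
    fix k assume "k \<in> {..<Suc m}"
    then have "(\<Prod>j\<in>{k+1..<Suc (Suc m)}. a_at j) = (\<Prod>j\<in>{k+1..<Suc m}. a_at j) * a_at (Suc m)"
      by (intro prod.atLeastLessThan_Suc) simp
    then show "(\<Prod>j<k. b_at j) * (\<Prod>j\<in>{k+1..<Suc (Suc m)}. a_at j)
        = a_at (Suc m) * ((\<Prod>j<k. b_at j) * (\<Prod>j\<in>{k+1..<Suc m}. a_at j))"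
      by (simp add: ac_simps)
  qed
  also have "\<dots> = a_at (Suc m) * kappa_upto m"
    by (simp only: kappa_upto_def sum_distrib_left)
  finally show ?thesis .
qed

lemma gen_sum_Suc: "gen_sum (Suc r) = a_at (Suc r) + b_at r"
  by (simp add: gen_sum_def algebra_simps)

lemma continuant_Suc: "continuant (Suc m) = a_at (Suc m) * continuant m + (\<Prod>j<Suc m. b_at j)"
proof (induction m)
  case 0
  then show ?case by (simp add: gen_sum_Suc)
next
  case (Suc m)
  have "continuant (Suc (Suc m))
      = (a_at (Suc (Suc m)) + b_at (Suc m)) * continuant (Suc m) - a_at (Suc m) * b_at (Suc m) * continuant m"
    by (simp add: gen_sum_Suc gen_prod_def)
  also have "\<dots> = a_at (Suc (Suc m)) * continuant (Suc m)
      + b_at (Suc m) * (continuant (Suc m) - a_at (Suc m) * continuant m)"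
    by (simp add: algebra_simps)
  also have "continuant (Suc m) - a_at (Suc m) * continuant m = (\<Prod>j<Suc m. b_at j)"
    using Suc by simp
  also have "b_at (Suc m) * (\<Prod>j<Suc m. b_at j) = (\<Prod>j<Suc (Suc m). b_at j)"
    by (simp add: ac_simps)
  finally show ?case .
qed

lemma kappa_eq_continuant: "kappa n (int i) = continuant (n - 1)"
proof -
  have "kappa n (int i) = kappa_upto (n - 1)"
    using n_pos by (simp add: kappa_def kappa_upto_def)
  moreover have "kappa_upto m = continuant m" for m
  proof (induction m)
    case 0
    then show ?case by (simp add: kappa_upto_def)
  qed (simp only: kappa_upto_Suc continuant_Suc)
  ultimately show ?thesis
    by simp
qed

lemma continuant_LSym: "continuant m \<in> LSym n"
  using gen_LSym[of "(1, _)"] gen_LSym[of "(2, _)"]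
  by (induction m rule: continuant.induct) (auto simp: gen_def intro: LSym_one LSym_diff LSym.mult)

lemma kappa_LSym: "kappa n (int i) \<in> LSym n"
  by (simp add: kappa_eq_continuant continuant_LSym)

section \<open>A triangular change of variables\<close>

text \<open>The change of variables \<open>\<theta>\<close> below sends \<open>a\<^sub>i\<^sub>+\<^sub>r\<close> to \<open>x\<^sub>r - y\<^sub>r\<^sub>-\<^sub>1\<close> and \<open>b\<^sub>i\<^sub>+\<^sub>r\<close> to \<open>y\<^sub>r\<close>,
  where \<open>x\<^sub>r = (1, r)\<close> and \<open>y\<^sub>r = y_var r\<close>; it turns each generator \<open>a\<^sub>i\<^sub>+\<^sub>r + b\<^sub>i\<^sub>+\<^sub>r\<^sub>-\<^sub>1\<close> into the
  single variable \<open>x\<^sub>r\<close>. Putting \<open>y\<^sub>r\<close> for even \<open>r\<close> into the smallest block \<open>0\<close> of the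
  lexicographic order is what makes the leading monomials of the generators independent.
  Variables outside \<open>C[a,b]\<close> are moved to the unused blocks \<open>s + 3\<close>, so that \<open>\<theta>\<close> is invertible.\<close>

definition y_var :: "nat \<Rightarrow> var" where
  "y_var r = (if even r \<and> r + 2 \<le> n then (0, r) else (2, r))"

definition theta_var :: "var \<Rightarrow> cpoly" where
  "theta_var v =
    (if fst v = 1 \<and> snd v < n then PVar (1, offset (int (snd v))) - PVar (y_var (offset (int (snd v) - 1)))
     else if fst v = 2 \<and> snd v < n then PVar (y_var (offset (int (snd v))))
     else PVar (fst v + 3, snd v))"

definition theta_inv_var :: "var \<Rightarrow> cpoly" where
  "theta_inv_var v =
    (if fst v \<ge> 3 then PVar (fst v - 3, snd v)
     else if fst v = 1 \<and> snd v < n then a_at (snd v) + bvar n (int i + int (snd v) - 1)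
     else if snd v < n \<and> v = y_var (snd v) then b_at (snd v)
     else 0)"

definition theta :: "cpoly \<Rightarrow> cpoly" where
  "theta p = subst theta_var p"

lemma theta_inv_var_y_var: "r < n \<Longrightarrow> theta_inv_var (y_var r) = b_at r"
  unfolding y_var_def theta_inv_var_def by auto

lemma theta_inv_theta_var: "subst theta_inv_var (theta_var v) = PVar v"
proof -
  obtain s k where v: "v = (s, k)" by fastforce
  consider "s = 1" "k < n" | "s = 2" "k < n" | "\<not> ((s = 1 \<or> s = 2) \<and> k < n)"
    by blast
  then show ?thesis
  proof cases
    case 1
    have "subst theta_inv_var (theta_var v)
        = a_at (offset (int k)) + bvar n (int i + int (offset (int k)) - 1) - b_at (offset (int k - 1))"
      using 1 offset_less by (simp add: v theta_var_def subst_diff theta_inv_var_y_var)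
         (simp add: theta_inv_var_def)
    also have "\<dots> = PVar v"
      using 1 n_pos by (simp add: avar_at_offset bvar_at_offset bvar_at_offset_pred) (simp add: avar_def v)
    finally show ?thesis .
  next
    case 2
    then show ?thesis
      using offset_less n_pos
      by (simp add: v theta_var_def theta_inv_var_y_var bvar_at_offset) (simp add: bvar_def)
  next
    case 3
    then show ?thesis
      by (auto simp: v theta_var_def theta_inv_var_def)
  qed
qed

lemma theta_inv_theta: "subst theta_inv_var (theta p) = p"
  unfolding theta_def subst_subst by (simp add: theta_inv_theta_var subst_PVar_id)

lemma theta_eq_0_iff: "theta p = 0 \<longleftrightarrow> p = 0"
  by (metis subst_zero theta_def theta_inv_theta)

lemma theta_const [simp]: "theta (single 0 c) = single 0 c"
  by (simp add: theta_def)

lemma theta_one [simp]: "theta 1 = 1"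
  by (simp add: theta_def)

lemma theta_add: "theta (p + q) = theta p + theta q"
  by (simp add: theta_def subst_add)

lemma theta_diff: "theta (p - q) = theta p - theta q"
  by (simp add: theta_def subst_diff)

lemma theta_mult: "theta (p * q) = theta p * theta q"
  by (simp add: theta_def subst_mult)

lemma theta_avar: "theta (avar n x) = PVar (1, offset x) - PVar (y_var (offset (x - 1)))"
proof -
  have "offset (int (nat (x mod int n))) = offset x"
    "offset (int (nat (x mod int n)) - 1) = offset (x - 1)"
    using n_pos by (simp_all add: offset_def mod_diff_left_eq algebra_simps)
  then show ?thesis
    using n_pos by (simp add: theta_def avar_def theta_var_def nat_less_iff)
qed

lemma theta_bvar: "theta (bvar n x) = PVar (y_var (offset x))"
proof -
  have "offset (int (nat (x mod int n))) = offset x"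
    using n_pos by (simp add: offset_def mod_diff_left_eq)
  then show ?thesis
    using n_pos by (simp add: theta_def bvar_def theta_var_def nat_less_iff)
qed

lemma theta_Cab: "p \<in> Cab n \<Longrightarrow> theta p \<in> polys_in ({0,1,2} \<times> {..<n})"
  unfolding theta_def Cab_eq_polys_in
proof (rule polys_in_subst)
  fix v :: var assume "v \<in> {1,2} \<times> {..<n}"
  then show "theta_var v \<in> polys_in ({0,1,2} \<times> {..<n})"
    using offset_less by (auto simp: theta_var_def y_var_def intro!: polys_in_diff polys_in_PVar)
qed


lemma theta_gen_sum: "r < n \<Longrightarrow> theta (gen_sum r) = PVar (1, r)"
  by (simp add: gen_sum_def theta_add theta_avar theta_bvar offset_at algebra_simps)

lemma theta_a_at:
  "r < n \<Longrightarrow> theta (a_at r) = PVar (1, r) - PVar (y_var (nat ((int r - 1) mod int n)))"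
  by (simp add: theta_avar offset_at offset_at_pred)

lemma theta_b_at: "r < n \<Longrightarrow> theta (b_at r) = PVar (y_var r)"
  by (simp add: theta_bvar offset_at)

lemma lead_monom_theta_a_at:
  assumes "r < n"
  shows "theta (a_at r) \<noteq> 0"
    and "lead_monom (theta (a_at r)) = (if odd r then single (0, r - 1) 1 else single (1, r) 1)"
proof -
  let ?t = "nat ((int r - 1) mod int n)"
  have "PVar (1, r) - PVar (y_var ?t) \<noteq> 0 \<and>
      lead_monom (PVar (1, r) - PVar (y_var ?t)) = (if odd r then single (0, r - 1) 1 else single (1, r) 1)"
  proof (cases "odd r")
    case True
    then have "r \<ge> 1" by (cases r) auto
    then have "?t = r - 1"
      using assms by (simp add: mod_pos_pos_trivial of_nat_diff)
    moreover have "y_var (r - 1) = (0, r - 1)"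
      using True \<open>r \<ge> 1\<close> assms by (auto simp: y_var_def)
    moreover have "lead_monom (PVar (1, r)) < lead_monom (PVar (0, r - 1))"
      unfolding lead_monom_PVar by (rule single_less_single) simp
    ultimately show ?thesis
      using lead_monom_diff'[OF PVar_nonzero, of "PVar (1, r)" "(0, r - 1)"] True by simp
  next
    case False
    have "?t = (if r = 0 then n - 1 else r - 1)"
      using assms by (simp add: zmod_minus1 mod_pos_pos_trivial) arith
    then have "fst (y_var ?t) = 2"
      using False assms by (cases "r = 0") (auto simp: y_var_def)
    then obtain t' where y: "y_var ?t = (2, t')"
      by (metis prod.collapse)
    have "lead_monom (PVar (y_var ?t)) < lead_monom (PVar (1, r))"
      unfolding y lead_monom_PVar by (rule single_less_single) simp
    then show ?thesis
      using lead_monom_diff[OF PVar_nonzero, of "PVar (y_var ?t)" "(1, r)"] False by simp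
  qed
  then show "theta (a_at r) \<noteq> 0"
    and "lead_monom (theta (a_at r)) = (if odd r then single (0, r - 1) 1 else single (1, r) 1)"
    using theta_a_at[OF assms] by simp_all
qed

definition gen_prod_lead :: "nat \<Rightarrow> var \<Rightarrow>\<^sub>0 nat" where
  "gen_prod_lead r = (if odd r then single (0, r - 1) 1 else single (1, r) 1) + single (y_var r) 1"

lemma lead_monom_theta_gen_prod:
  assumes "r < n"
  shows "theta (gen_prod r) \<noteq> 0" "lead_monom (theta (gen_prod r)) = gen_prod_lead r"
  using lead_monom_theta_a_at[OF assms] lead_monom_mult(1)[of "theta (a_at r)" "theta (b_at r)"]
  by (simp_all add: gen_prod_def theta_mult theta_b_at[OF assms] gen_prod_lead_def)

definition odd_lead_sum :: "nat \<Rightarrow> var \<Rightarrow>\<^sub>0 nat" where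
  "odd_lead_sum m = (\<Sum>r\<in>{r. r < m \<and> odd r}. gen_prod_lead r)"

definition continuant_lead :: "nat \<Rightarrow> var \<Rightarrow>\<^sub>0 nat" where
  "continuant_lead m = odd_lead_sum m + (if odd m then single (1, m) 1 else 0)"

lemma odd_lead_sum_0 [simp]: "odd_lead_sum 0 = 0"
  by (simp add: odd_lead_sum_def)

lemma odd_lead_sum_Suc: "odd_lead_sum (Suc m) = odd_lead_sum m + (if odd m then gen_prod_lead m else 0)"
proof (cases "odd m")
  case True
  then have "{r. r < Suc m \<and> odd r} = insert m {r. r < m \<and> odd r}" by auto
  then show ?thesis using True by (simp add: odd_lead_sum_def add.commute)
next
  case False
  then have "{r. r < Suc m \<and> odd r} = {r. r < m \<and> odd r}" by (auto simp: less_Suc_eq)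
  then show ?thesis using False by (simp add: odd_lead_sum_def)
qed

text \<open>In \<open>\<theta>(Q\<^sub>m\<^sub>+\<^sub>2) = x\<^sub>m\<^sub>+\<^sub>2 \<theta>(Q\<^sub>m\<^sub>+\<^sub>1) - \<theta>(V\<^sub>m\<^sub>+\<^sub>1) \<theta>(Q\<^sub>m)\<close> the second product has the larger
  leading monomial for even \<open>m\<close> and the first one for odd \<open>m\<close>.\<close>

lemma continuant_lead_step_even:
  assumes "even m"
  shows "single (1, m + 2) 1 + continuant_lead (Suc m) < gen_prod_lead (Suc m) + continuant_lead m"
    and "gen_prod_lead (Suc m) + continuant_lead m = continuant_lead (Suc (Suc m))"
proof -
  have "single (1, m + 2) 1 + single (1, m + 1) 1 < single (0, m) 1 + (single (2, m + 1) 1 :: var \<Rightarrow>\<^sub>0 nat)"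
    by (rule less_poly_mappingI[of _ "(0, m)"]) (auto simp: lookup_add lookup_single)
  then show "single (1, m + 2) 1 + continuant_lead (Suc m) < gen_prod_lead (Suc m) + continuant_lead m"
    using assms add_strict_right_mono[of _ _ "odd_lead_sum m"]
    by (simp add: continuant_lead_def odd_lead_sum_Suc gen_prod_lead_def y_var_def ac_simps)
  show "gen_prod_lead (Suc m) + continuant_lead m = continuant_lead (Suc (Suc m))"
    using assms by (simp add: continuant_lead_def odd_lead_sum_Suc ac_simps)
qed

lemma continuant_lead_step_odd:
  assumes "odd m" "m + 3 \<le> n"
  shows "gen_prod_lead (Suc m) + continuant_lead m < single (1, m + 2) 1 + continuant_lead (Suc m)"
    and "single (1, m + 2) 1 + continuant_lead (Suc m) = continuant_lead (Suc (Suc m))"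
proof -
  have "single (1, m + 1) 1 + single (0, m + 1) 1 + single (1, m) 1
      < single (1, m + 2) 1 + single (0, m - 1) 1 + (single (2, m) 1 :: var \<Rightarrow>\<^sub>0 nat)"
    using assms(1) by (intro less_poly_mappingI[of _ "(0, m - 1)"]) (auto simp: lookup_add lookup_single elim: oddE)
  then show "gen_prod_lead (Suc m) + continuant_lead m < single (1, m + 2) 1 + continuant_lead (Suc m)"
    using assms add_strict_right_mono[of _ _ "odd_lead_sum m"]
    by (simp add: continuant_lead_def odd_lead_sum_Suc gen_prod_lead_def y_var_def ac_simps)
  show "single (1, m + 2) 1 + continuant_lead (Suc m) = continuant_lead (Suc (Suc m))"
    using assms by (simp add: continuant_lead_def odd_lead_sum_Suc ac_simps)
qed

lemma lead_monom_theta_continuant: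
  "m < n \<Longrightarrow> theta (continuant m) \<noteq> 0 \<and> lead_monom (theta (continuant m)) = continuant_lead m"
proof (induction m rule: continuant.induct)
  case 1
  show ?case by (simp add: theta_def continuant_lead_def)
next
  case 2
  then show ?case by (simp add: theta_gen_sum continuant_lead_def odd_lead_sum_Suc)
next
  case (3 m)
  let ?p = "PVar (1, m + 2) * theta (continuant (Suc m))"
  let ?q = "theta (gen_prod (Suc m)) * theta (continuant m)"
  have split: "theta (continuant (Suc (Suc m))) = ?p - ?q"
    using "3.prems" by (simp add: theta_diff theta_mult theta_gen_sum)
  have p: "?p \<noteq> 0" "lead_monom ?p = single (1, m + 2) 1 + continuant_lead (Suc m)"
    using "3.IH"(1) "3.prems" lead_monom_mult(1)[OF PVar_nonzero, of "theta (continuant (Suc m))"] by simp_all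
  have q: "?q \<noteq> 0" "lead_monom ?q = gen_prod_lead (Suc m) + continuant_lead m"
    using "3.IH"(2) "3.prems" lead_monom_theta_gen_prod[of "Suc m"]
      lead_monom_mult(1)[of "theta (gen_prod (Suc m))" "theta (continuant m)"] by simp_all
  show ?case
  proof (cases "even m")
    case True
    then show ?thesis
      using split p q lead_monom_diff'[of ?q ?p] continuant_lead_step_even[OF True] by simp
  next
    case False
    then show ?thesis
      using split p q lead_monom_diff[of ?p ?q] continuant_lead_step_odd[OF _ ] "3.prems" by simp
  qed
qed

lemma lead_monom_theta_kappa:
  "theta (kappa n (int i)) \<noteq> 0" "lead_monom (theta (kappa n (int i))) = continuant_lead (n - 1)"
  using lead_monom_theta_continuant[of "n - 1"] n_pos by (simp_all add: kappa_eq_continuant)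

definition gen_lead :: "var \<Rightarrow> var \<Rightarrow>\<^sub>0 nat" where
  "gen_lead v = (if fst v = 1 then single (1, snd v) 1 else gen_prod_lead (snd v))"

lemma lead_monom_theta_gen: "v \<in> gen_vars \<Longrightarrow> theta (gen v) \<noteq> 0 \<and> lead_monom (theta (gen v)) = gen_lead v"
  using theta_gen_sum lead_monom_theta_gen_prod by (auto simp: gen_def gen_lead_def)

definition theta_monom :: "(var \<Rightarrow>\<^sub>0 nat) \<Rightarrow> cpoly" where
  "theta_monom m = theta (subst_monom gen m)"

definition lead_weight :: "var \<Rightarrow> (var \<Rightarrow>\<^sub>0 nat) \<Rightarrow> nat" where
  "lead_weight x m = (\<Sum>v\<in>gen_vars. lookup m v * lookup (gen_lead v) x)"

lemma lead_monom_theta_monom: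
  assumes "keys m \<subseteq> gen_vars"
  shows "theta_monom m \<noteq> 0" "lookup (lead_monom (theta_monom m)) x = lead_weight x m"
proof -
  have theta_monom_eq: "theta_monom m = (\<Prod>v\<in>keys m. theta (gen v) ^ lookup m v)"
    by (simp add: theta_monom_def theta_def subst_monom_def subst_prod subst_power)
  have nonzero: "theta (gen v) \<noteq> 0" if "v \<in> keys m" for v
    using lead_monom_theta_gen assms that by blast
  show "theta_monom m \<noteq> 0"
    using lead_monom_prod_power(1)[OF finite_keys nonzero] theta_monom_eq by simp
  have "lookup (lead_monom (theta_monom m)) x
      = (\<Sum>v\<in>keys m. lookup m v * lookup (lead_monom (theta (gen v))) x)"
    unfolding theta_monom_eq by (rule lead_monom_prod_power(2)[OF finite_keys nonzero])
  also have "\<dots> = (\<Sum>v\<in>keys m. lookup m v * lookup (gen_lead v) x)"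
    using lead_monom_theta_gen assms by (intro sum.cong) auto
  also have "\<dots> = lead_weight x m"
    unfolding lead_weight_def
    by (rule sum.mono_neutral_left) (use assms in \<open>auto simp: in_keys_iff\<close>)
  finally show "lookup (lead_monom (theta_monom m)) x = lead_weight x m" .
qed

lemma lead_monom_theta_monom_add:
  "keys a \<subseteq> gen_vars \<Longrightarrow> keys b \<subseteq> gen_vars \<Longrightarrow>
    lead_monom (theta_monom (a + b)) = lead_monom (theta_monom a) + lead_monom (theta_monom b)"
  using lead_monom_mult(1)[OF lead_monom_theta_monom(1) lead_monom_theta_monom(1), of a b]
  by (simp add: theta_monom_def subst_monom_add theta_mult)

lemma lookup_gen_lead:
  "lookup (gen_lead v) x =
    (if fst v = 1 then (if x = (1, snd v) then 1 else 0)
     else (if odd (snd v) then (if x = (0, snd v - 1) then 1 else 0) else (if x = (1, snd v) then 1 else 0))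
          + (if x = y_var (snd v) then 1 else 0))"
  by (auto simp: gen_lead_def gen_prod_lead_def lookup_add lookup_single)

text \<open>Reading off the exponents of a monomial in the generators from the leading monomial of its
  image, in the order: \<open>y\<^sub>t\<close> in block \<open>2\<close>, then \<open>y\<^sub>t\<close> in block \<open>0\<close>, then \<open>x\<^sub>t\<close>.\<close>

lemma lead_weight_x:
  assumes "t < n"
  shows "lead_weight (1, t) m = lookup m (1, t) + (if even t then lookup m (2, t) else 0)"
proof -
  have "lead_weight (1, t) m = (\<Sum>v\<in>gen_vars. (if v = (1, t) then lookup m v else 0)
      + (if v = (2, t) then (if even t then lookup m v else 0) else 0))"
    unfolding lead_weight_def by (rule sum.cong) (auto simp: lookup_gen_lead y_var_def)
  also have "\<dots> = lookup m (1, t) + (if even t then lookup m (2, t) else 0)"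
    using assms by (simp add: sum.distrib sum.delta')
  finally show ?thesis .
qed

lemma lead_weight_y2:
  assumes "t < n" "\<not> (even t \<and> t + 2 \<le> n)"
  shows "lead_weight (2, t) m = lookup m (2, t)"
proof -
  have "lead_weight (2, t) m = (\<Sum>v\<in>gen_vars. (if v = (2, t) then lookup m v else 0))"
    unfolding lead_weight_def using assms(2) by (intro sum.cong) (auto simp: lookup_gen_lead y_var_def)
  also have "\<dots> = lookup m (2, t)"
    using assms by (simp add: sum.delta')
  finally show ?thesis .
qed

lemma lead_weight_y0:
  assumes "even t" "t + 2 \<le> n"
  shows "lead_weight (0, t) m = lookup m (2, t) + lookup m (2, t + 1)"
proof -
  have "lead_weight (0, t) m = (\<Sum>v\<in>gen_vars. (if v = (2, t) then lookup m v else 0)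
      + (if v = (2, t + 1) then lookup m v else 0))"
    unfolding lead_weight_def using assms by (intro sum.cong) (auto simp: lookup_gen_lead y_var_def elim: oddE)
  also have "\<dots> = lookup m (2, t) + lookup m (2, t + 1)"
    using assms by (simp add: sum.distrib sum.delta')
  finally show ?thesis .
qed

lemma lead_monom_theta_monom_inj:
  assumes "keys m1 \<subseteq> gen_vars" "keys m2 \<subseteq> gen_vars"
    and "lead_monom (theta_monom m1) = lead_monom (theta_monom m2)"
  shows "m1 = m2"
proof -
  have weights: "lead_weight x m1 = lead_weight x m2" for x
    using lead_monom_theta_monom(2)[OF assms(1), of x] lead_monom_theta_monom(2)[OF assms(2), of x] assms(3)
    by simp
  have y2: "lookup m1 (2, t) = lookup m2 (2, t)" if "t < n" "\<not> (even t \<and> t + 2 \<le> n)" for t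
    using weights[of "(2, t)"] lead_weight_y2[OF that] by simp
  have y: "lookup m1 (2, t) = lookup m2 (2, t)" if "t < n" for t
  proof (cases "even t \<and> t + 2 \<le> n")
    case True
    then have "lookup m1 (2, t + 1) = lookup m2 (2, t + 1)"
      by (intro y2) auto
    then show ?thesis
      using weights[of "(0, t)"] lead_weight_y0[of t] True by simp
  next
    case False
    then show ?thesis using y2 that by simp
  qed
  have x: "lookup m1 (1, t) = lookup m2 (1, t)" if "t < n" for t
    using weights[of "(1, t)"] lead_weight_x[OF that] y[OF that] by (cases "even t") auto
  show ?thesis
  proof (rule poly_mapping_eqI)
    fix v :: var
    show "lookup m1 v = lookup m2 v"
    proof (cases "v \<in> gen_vars")
      case True
      then show ?thesis using x y by auto
    next
      case False
      then have "v \<notin> keys m1" "v \<notin> keys m2" using assms(1,2) by auto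
      then show ?thesis by (simp add: in_keys_iff)
    qed
  qed
qed

text \<open>The exponents of the monomial in the generators whose image has the same leading monomial
  as \<open>\<theta>(\<kappa>\<^sub>i)\<close>: the product of the \<open>V\<^sub>r\<close> with \<open>r < n - 1\<close> odd, times \<open>U\<^sub>n\<^sub>-\<^sub>1\<close> if \<open>n - 1\<close> is odd.\<close>

definition kappa_exps :: "var \<Rightarrow>\<^sub>0 nat" where
  "kappa_exps = (\<Sum>r\<in>{r. r < n - 1 \<and> odd r}. single (2, r) 1)
    + (if odd (n - 1) then single (1, n - 1) 1 else 0)"

lemma lead_monom_theta_monom_sum_gen_prod:
  assumes "finite R" "R \<subseteq> {..<n}"
  shows "keys (\<Sum>r\<in>R. single (2, r) (1::nat)) \<subseteq> gen_vars"
    and "lead_monom (theta_monom (\<Sum>r\<in>R. single (2, r) 1)) = (\<Sum>r\<in>R. gen_prod_lead r)"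
proof -
  have "keys (\<Sum>r\<in>R. single (2, r) (1::nat)) \<subseteq> gen_vars \<and>
      lead_monom (theta_monom (\<Sum>r\<in>R. single (2, r) 1)) = (\<Sum>r\<in>R. gen_prod_lead r)"
    using assms
  proof (induction R rule: finite_induct)
    case empty
    show ?case by (simp add: theta_monom_def theta_def subst_monom_def)
  next
    case (insert a R)
    have a: "keys (single (2, a) (1::nat)) \<subseteq> gen_vars"
      "lead_monom (theta_monom (single (2, a) 1)) = gen_prod_lead a"
      using insert.prems lead_monom_theta_gen[of "(2, a)"]
      by (auto simp: theta_monom_def subst_monom_def gen_lead_def)
    show ?case
      using insert lead_monom_theta_monom_add[OF a(1)] a keys_add_subset[OF a(1)] by simp
  qed
  then show "keys (\<Sum>r\<in>R. single (2, r) (1::nat)) \<subseteq> gen_vars"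
    and "lead_monom (theta_monom (\<Sum>r\<in>R. single (2, r) 1)) = (\<Sum>r\<in>R. gen_prod_lead r)"
    by simp_all
qed

lemma kappa_exps:
  "keys kappa_exps \<subseteq> gen_vars" "lead_monom (theta_monom kappa_exps) = continuant_lead (n - 1)"
proof -
  let ?R = "{r. r < n - 1 \<and> odd r}"
  let ?X = "if odd (n - 1) then single (1, n - 1) 1 else 0 :: var \<Rightarrow>\<^sub>0 nat"
  have R: "finite ?R" "?R \<subseteq> {..<n}" by auto
  note S = lead_monom_theta_monom_sum_gen_prod[OF R]
  have X: "keys ?X \<subseteq> gen_vars" "lead_monom (theta_monom ?X) = ?X"
    using n_pos by (auto simp: theta_monom_def subst_monom_def gen_def theta_gen_sum)
  show "keys kappa_exps \<subseteq> gen_vars"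
    unfolding kappa_exps_def using S(1) X(1) by (rule keys_add_subset)
  show "lead_monom (theta_monom kappa_exps) = continuant_lead (n - 1)"
    unfolding kappa_exps_def lead_monom_theta_monom_add[OF S(1) X(1)] S(2) X(2)
    by (simp add: continuant_lead_def odd_lead_sum_def)
qed

lemma keys_kappa_exps:
  assumes "v \<in> keys kappa_exps"
  shows "(\<exists>r. v = (2, r) \<and> odd r \<and> r < n) \<or> (v = (1, n - 1) \<and> odd (n - 1))"
proof -
  let ?S = "\<Sum>r\<in>{r. r < n - 1 \<and> odd r}. single (2, r) (1::nat)"
  have "v \<in> keys ?S \<union> keys (if odd (n - 1) then single (1, n - 1) 1 else (0 :: var \<Rightarrow>\<^sub>0 nat))"
    using assms unfolding kappa_exps_def by (rule subsetD[OF keys_add])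
  then show ?thesis
    unfolding Un_iff
  proof
    assume "v \<in> keys ?S"
    then have "v \<in> (\<Union>r\<in>{r. r < n - 1 \<and> odd r}. keys (single (2, r) (1::nat)))"
      by (rule subsetD[OF keys_sum])
    then show ?thesis by auto
  qed (auto split: if_splits)
qed

text \<open>Leading monomials determine exponents, so such an \<open>m\<close> contains \<open>kappa_exps\<close>.\<close>

lemma lead_monom_theta_monom_cancel_kappa:
  assumes "keys m \<subseteq> gen_vars" "lead_monom (theta_monom m) = continuant_lead (n - 1) + \<mu>"
  obtains m' where "keys m' \<subseteq> gen_vars" "lead_monom (theta_monom m') = \<mu>"
proof -
  note \<kappa> = kappa_exps
  have weights: "lead_weight x m = lead_weight x kappa_exps + lookup \<mu> x" for x
    using lead_monom_theta_monom(2)[OF assms(1), of x] lead_monom_theta_monom(2)[OF \<kappa>(1), of x] assms(2) \<kappa>(2)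
    by (simp add: lookup_add)
  have le: "lookup kappa_exps v \<le> lookup m v" for v
  proof (cases "v \<in> keys kappa_exps")
    case True
    then consider r where "v = (2, r)" "odd r" "r < n" | "v = (1, n - 1)" "odd (n - 1)"
      using keys_kappa_exps by blast
    then show ?thesis
    proof cases
      case 1
      then show ?thesis
        using weights[of "(2, r)"] lead_weight_y2[of r] by simp
    next
      case 2
      then show ?thesis
        using weights[of "(1, n - 1)"] lead_weight_x[of "n - 1"] n_pos by simp
    qed
  qed (simp add: in_keys_iff)
  define m' where "m' = m - kappa_exps"
  have m: "m = kappa_exps + m'"
    by (rule poly_mapping_eqI) (simp add: m'_def lookup_add lookup_minus le)
  have "keys m' \<subseteq> gen_vars"
  proof
    fix v assume "v \<in> keys m'"
    then have "v \<in> keys m"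
      by (auto simp: m'_def lookup_minus in_keys_iff)
    then show "v \<in> gen_vars"
      using assms(1) by blast
  qed
  moreover have "lead_monom (theta_monom m') = \<mu>"
    using lead_monom_theta_monom_add[OF \<kappa>(1) \<open>keys m' \<subseteq> gen_vars\<close>] m assms(2) \<kappa>(2) by simp
  ultimately show ?thesis
    using that by blast
qed

section \<open>Subduction\<close>

lemma theta_subst_gen: "theta (subst gen P) = (\<Sum>m\<in>keys P. PConst (lookup P m) * theta_monom m)"
  by (simp only: theta_def subst_def[of gen P] subst_sum subst_mult subst_const theta_monom_def PConst_def)

text \<open>Since distinct monomials in the generators have distinct leading monomials after \<open>\<theta>\<close>,
  no cancellation occurs among them.\<close>

lemma lead_monom_theta_LSym:
  assumes "g \<in> LSym n" "g \<noteq> 0"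
  obtains m where "keys m \<subseteq> gen_vars" "lead_monom (theta g) = lead_monom (theta_monom m)"
proof -
  obtain P where P: "P \<in> polys_in gen_vars" "g = subst gen P"
    by (rule LSym_eq_subst_gen[OF assms(1)])
  have keys_P: "keys m \<subseteq> gen_vars" if "m \<in> keys P" for m
    using P(1) that unfolding polys_in_def by blast
  have "keys P \<noteq> {}"
    using assms(2) P(2) by (metis keys_eq_empty subst_zero)
  moreover have "lookup P m \<noteq> 0" if "m \<in> keys P" for m
    using that by (simp add: in_keys_iff)
  moreover have "theta_monom m \<noteq> 0" if "m \<in> keys P" for m
    using lead_monom_theta_monom(1)[OF keys_P[OF that]] .
  moreover have "inj_on (\<lambda>m. lead_monom (theta_monom m)) (keys P)"
    using lead_monom_theta_monom_inj[OF keys_P keys_P] by (blast intro: inj_onI)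
  ultimately have "\<exists>m\<in>keys P.
      lead_monom (\<Sum>m\<in>keys P. single 0 (lookup P m) * theta_monom m) = lead_monom (theta_monom m)"
    by (rule lead_monom_sum_distinct[OF finite_keys])
  then obtain m where m: "m \<in> keys P"
    "lead_monom (\<Sum>m\<in>keys P. single 0 (lookup P m) * theta_monom m) = lead_monom (theta_monom m)"
    by blast
  have "lead_monom (theta g) = lead_monom (theta_monom m)"
    using P(2) m(2) by (simp add: theta_subst_gen PConst_def)
  then show ?thesis
    by (rule that[OF keys_P[OF m(1)]])
qed

lemma kappa_mult_subduction_step:
  assumes "q \<noteq> 0" "kappa n (int i) * q \<in> LSym n"
  obtains M c where "M \<in> LSym n"
    and "q - PConst c * M = 0 \<or> lead_monom (theta (q - PConst c * M)) < lead_monom (theta q)"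
proof -
  note \<kappa> = lead_monom_theta_kappa
  have theta_q: "theta q \<noteq> 0"
    using assms(1) theta_eq_0_iff by blast
  have "theta (kappa n (int i) * q) \<noteq> 0"
    "lead_monom (theta (kappa n (int i) * q)) = continuant_lead (n - 1) + lead_monom (theta q)"
    using \<kappa> theta_q lead_monom_mult(1)[OF \<kappa>(1) theta_q] by (simp_all add: theta_mult)
  then obtain m where "keys m \<subseteq> gen_vars"
    "lead_monom (theta_monom m) = continuant_lead (n - 1) + lead_monom (theta q)"
    using lead_monom_theta_LSym[OF assms(2)] theta_eq_0_iff by metis
  then obtain m' where m': "keys m' \<subseteq> gen_vars" "lead_monom (theta_monom m') = lead_monom (theta q)"
    by (rule lead_monom_theta_monom_cancel_kappa)
  define M where "M = subst_monom gen m'"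
  have theta_M: "theta M \<noteq> 0" "lead_monom (theta M) = lead_monom (theta q)"
    using lead_monom_theta_monom(1)[OF m'(1)] m'(2) by (simp_all add: M_def theta_monom_def)
  define c where "c = lead_coef (theta q) / lead_coef (theta M)"
  have "c \<noteq> 0"
    using lead_coef_nonzero[OF theta_q] lead_coef_nonzero[OF theta_M(1)] by (simp add: c_def)
  then have "lead_monom (theta (PConst c * M)) = lead_monom (theta q)"
    "lead_coef (theta (PConst c * M)) = lead_coef (theta q)"
    using lead_monom_const_mult[OF _ theta_M(1)] theta_M(2) lead_coef_nonzero[OF theta_M(1)]
    by (simp_all add: theta_mult PConst_def c_def)
  then have "lead_monom (theta (q - PConst c * M)) < lead_monom (theta q)"
    if "q - PConst c * M \<noteq> 0"
    using lead_monom_diff_less[of "theta q" "theta (PConst c * M)"] that theta_eq_0_iff[of "q - PConst c * M"]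
    by (simp add: theta_diff)
  then have "q - PConst c * M = 0 \<or> lead_monom (theta (q - PConst c * M)) < lead_monom (theta q)"
    by blast
  then show ?thesis
    using that subst_monom_gen_LSym M_def by blast
qed

lemma kappa_mult_remainder:
  assumes "q \<in> Cab n" "kappa n (int i) * q \<in> LSym n" "M \<in> LSym n"
  shows "q - PConst c * M \<in> Cab n" "kappa n (int i) * (q - PConst c * M) \<in> LSym n"
proof -
  have "M \<in> Cab n"
    using LSym_subset_Cab[OF n_pos] assms(3) by blast
  then show "q - PConst c * M \<in> Cab n"
    using assms(1) unfolding Cab_eq_polys_in PConst_def
    by (intro polys_in_diff polys_in_mult polys_in_const)
  have "kappa n (int i) * (q - PConst c * M) = kappa n (int i) * q - PConst c * (kappa n (int i) * M)"
    by (simp add: algebra_simps)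
  then show "kappa n (int i) * (q - PConst c * M) \<in> LSym n"
    using LSym_diff[OF assms(2) LSym_smult[OF LSym.mult[OF kappa_LSym assms(3)]]] by simp
qed

lemma LSym_of_kappa_mult:
  assumes "q \<in> Cab n" "kappa n (int i) * q \<in> LSym n"
  shows "q \<in> LSym n"
proof -
  define K :: "var set" where "K = {0,1,2} \<times> {..<n}"
  define R where "R = {(\<mu>::var \<Rightarrow>\<^sub>0 nat, \<nu>). keys \<mu> \<subseteq> K \<and> keys \<nu> \<subseteq> K \<and> \<mu> < \<nu>}"
  have lead_in_K: "keys (lead_monom (theta p)) \<subseteq> K" if "p \<in> Cab n" "p \<noteq> 0" for p
    using theta_Cab[OF that(1)] lead_monom_in_keys[of "theta p"] that(2) theta_eq_0_iff
    by (auto simp: K_def polys_in_def)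
  have "wf (inv_image R (\<lambda>p. lead_monom (theta p)))"
    unfolding R_def by (intro wf_inv_image wf_less_monom_within) (simp add: K_def)
  then show ?thesis
    using assms
  proof (induction q rule: wf_induct_rule)
    case (less q)
    show ?case
    proof (cases "q = 0")
      case True
      then show ?thesis by (simp add: LSym_zero)
    next
      case False
      then obtain M c where M: "M \<in> LSym n"
        and smaller: "q - PConst c * M = 0 \<or> lead_monom (theta (q - PConst c * M)) < lead_monom (theta q)"
        using kappa_mult_subduction_step less.prems(2) by blast
      let ?q' = "q - PConst c * M"
      note q' = kappa_mult_remainder[OF less.prems M]
      have "?q' \<in> LSym n"
      proof (cases "?q' = 0")
        case True
        then show ?thesis by (simp add: LSym_zero)
      next
        case q'_nonzero: False
        then have "(?q', q) \<in> inv_image R (\<lambda>p. lead_monom (theta p))"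
          using smaller lead_in_K[OF q'(1) q'_nonzero] lead_in_K[OF less.prems(1) False] by (simp add: R_def)
        then show ?thesis
          using less.IH q' by blast
      qed
      then have "?q' + PConst c * M \<in> LSym n"
        using M by (intro LSym.add LSym_smult)
      then show ?thesis by simp
    qed
  qed
qed

end

theorem lemmaB4:
  fixes n :: nat and i :: nat and g :: cpoly
  assumes "i \<in> {1..n}"
    and "g \<in> LSym n" and "g \<noteq> 0"
    and "\<exists>h \<in> Cab n. g = kappa n (int i) * h"
  shows "\<exists>h \<in> LSym n. g = kappa n (int i) * h"
proof -
  interpret cyclic_indices n i
    using assms(1) by unfold_locales simp
  obtain h where "h \<in> Cab n" "g = kappa n (int i) * h"
    using assms(4) by blast
  then show ?thesis
    using LSym_of_kappa_mult assms(2) by blast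
qed

end
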